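(* For $s\in[0,1]$ let $|\alpha^n_s\rangle$ be the (unique) ground state of $H^n_s=(1-s)\sum_{k=1}^n|-\rangle\langle-|_k+s\sum_{k=1}^n|1\rangle\langle1|_k$; it has the form $(\cos\varphi_s|0\rangle+\sin\varphi_s|1\rangle)^{\otimes n}=(\cos\xi_s|+\rangle+\sin\xi_s|-\rangle)^{\otimes n}$ with $\varphi_s\in[0,\pi/4]$, $\xi_s=\pi/4-\varphi_s$. For every real $\vartheta\ge n/2$ and every $s\in[0,1]$, $$\sum_{j:\,h(j)\ge\vartheta}\Big(|\langle j|\alpha^n_s\rangle|^2+|\langle j_+|\alpha^n_s\rangle|^2\Big)\le2\exp\!\Big(-\frac{2(\vartheta-n/2)^2}{3n}\Big).$$
   Context: On $n$ qubits with computational basis $|j\rangle$, $j\in\{0,\dots,2^n-1\}$: $h(j)$ is the Hamming weight of $j$ and $|j_+\rangle=\mathsf H^{\otimes n}|j\rangle$ with $\mathsf H$ the Hadamard gate; subscript $k$ means the operator acts on qubit $k$. *)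

theory Defs
  imports Complex_Main
begin

text \<open>States on n qubits are functions nat => complex supported on {0..<2^n};
  operators are functions nat => nat => complex (matrix entries on {0..<2^n}).
  Qubit k (k = 1..n) corresponds to bit (k-1) of the basis index j.\<close>

definition hamming :: "nat \<Rightarrow> nat \<Rightarrow> nat" where
  "hamming n j = card {i. i < n \<and> bit j i}"

text \<open>Matrix entry of |-><-| acting on qubit (bit) k, identity elsewhere.\<close>
definition minus_proj :: "nat \<Rightarrow> nat \<Rightarrow> nat \<Rightarrow> nat \<Rightarrow> complex" where
  "minus_proj n k j j' =
     (if (\<forall>i<n. i \<noteq> k \<longrightarrow> (bit j i \<longleftrightarrow> bit j' i))
      then (if (bit j k \<longleftrightarrow> bit j' k) then 1/2 else -1/2) else 0)"

definition one_proj :: "nat \<Rightarrow> nat \<Rightarrow> nat \<Rightarrow> complex" where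
  "one_proj k j j' = (if j = j' \<and> bit j k then 1 else 0)"

definition Ham :: "nat \<Rightarrow> real \<Rightarrow> nat \<Rightarrow> nat \<Rightarrow> complex" where
  "Ham n s j j' = of_real (1 - s) * (\<Sum>k<n. minus_proj n k j j')
                 + of_real s * (\<Sum>k<n. one_proj k j j')"

definition matvec :: "nat \<Rightarrow> (nat \<Rightarrow> nat \<Rightarrow> complex) \<Rightarrow> (nat \<Rightarrow> complex) \<Rightarrow> nat \<Rightarrow> complex" where
  "matvec n M v = (\<lambda>i. if i < 2^n then (\<Sum>j<2^n. M i j * v j) else 0)"

definition is_state :: "nat \<Rightarrow> (nat \<Rightarrow> complex) \<Rightarrow> bool" where
  "is_state n v \<longleftrightarrow> (\<forall>j\<ge>2^n. v j = 0)"

definition is_eigenvalue :: "nat \<Rightarrow> (nat \<Rightarrow> nat \<Rightarrow> complex) \<Rightarrow> complex \<Rightarrow> bool" where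
  "is_eigenvalue n M E \<longleftrightarrow>
     (\<exists>v. is_state n v \<and> (\<exists>j<2^n. v j \<noteq> 0) \<and> matvec n M v = (\<lambda>i. E * v i))"

definition ground_state :: "nat \<Rightarrow> (nat \<Rightarrow> nat \<Rightarrow> complex) \<Rightarrow> (nat \<Rightarrow> complex) \<Rightarrow> bool" where
  "ground_state n M \<alpha> \<longleftrightarrow> is_state n \<alpha> \<and> (\<Sum>j<2^n. (cmod (\<alpha> j))^2) = 1 \<and>
     (\<exists>E. matvec n M \<alpha> = (\<lambda>i. E * \<alpha> i) \<and> (\<forall>E'. is_eigenvalue n M E' \<longrightarrow> Re E \<le> Re E'))"

text \<open>Amplitude <j_+|v> where |j_+> = H^{\<otimes>n}|j>; (H^{\<otimes>n})_{j',j} = (-1)^{h(j' AND j)} / sqrt(2^n), real.\<close>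
definition hadamard_amp :: "nat \<Rightarrow> nat \<Rightarrow> (nat \<Rightarrow> complex) \<Rightarrow> complex" where
  "hadamard_amp n j v = (\<Sum>j'<2^n. of_real ((-1) ^ hamming n (and j j') / sqrt (2^n)) * v j')"

end

theory Submission imports Defs "HOL-Probability.Hoeffding" begin

text \<open>
  The Hamiltonian is a sum of copies of one single-qubit operator acting on the different
  qubits, so it is diagonalised by the tensor products of a single-qubit eigenbasis
  \<open>a|0\<rangle> + b|1\<rangle>\<close>, \<open>-b|0\<rangle> + a|1\<rangle>\<close> with \<open>0 \<le> b \<le> a\<close>, \<open>a\<^sup>2 + b\<^sup>2 = 1\<close>. The eigenvalue of a product
  vector is the sum of the single-qubit eigenvalues, which is strictly smallest for the
  all-ground product, so every ground state is a phase times \<open>(a|0\<rangle> + b|1\<rangle>)\<^sup>\<otimes>\<^sup>n\<close>.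
  Measured in the computational or in the Hadamard basis, this state yields independent
  bits which equal 1 with probability \<open>b\<^sup>2\<close>, resp. \<open>(a - b)\<^sup>2/2\<close>, both at most \<open>1/2\<close>.
  A Chernoff bound for the number of ones then bounds each of the two tails by
  \<open>exp (-2(\<vartheta> - n/2)\<^sup>2/n)\<close>.
\<close>

section \<open>Sums over bit strings\<close>

lemma sum_lessThan_double:
  fixes F :: "nat \<Rightarrow> 'a::comm_monoid_add"
  shows "(\<Sum>x<2*m. F x) = (\<Sum>y<m. F (2*y)) + (\<Sum>y<m. F (2*y+1))"
  by (induction m) (simp_all add: algebra_simps)

lemma sum_bit_strings_prod:
  fixes f :: "nat \<Rightarrow> bool \<Rightarrow> 'a::comm_semiring_1"
  shows "(\<Sum>x::nat<2^n. \<Prod>i<n. f i (bit x i)) = (\<Prod>i<n. f i False + f i True)"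
proof (induction n arbitrary: f)
  case 0 then show ?case by simp
next
  case (Suc n)
  have split_lowest: "(\<Prod>i<Suc n. f i (bit x i)) = f 0 (odd x) * (\<Prod>i<n. f (Suc i) (bit (x div 2) i))"
    for x :: nat
    by (subst prod.lessThan_Suc_shift) (simp add: bit_Suc bit_0)
  have "(\<Sum>x::nat<2^Suc n. \<Prod>i<Suc n. f i (bit x i))
      = (\<Sum>y::nat<2^n. f 0 False * (\<Prod>i<n. f (Suc i) (bit y i)))
        + (\<Sum>y::nat<2^n. f 0 True * (\<Prod>i<n. f (Suc i) (bit y i)))"
    by (simp only: power_Suc sum_lessThan_double split_lowest) simp
  also have "\<dots> = (f 0 False + f 0 True) * (\<Prod>i<n. f (Suc i) False + f (Suc i) True)"
    using Suc[of "\<lambda>i. f (Suc i)"] by (simp add: sum_distrib_left[symmetric] distrib_right)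
  also have "\<dots> = (\<Prod>i<Suc n. f i False + f i True)"
    by (subst prod.lessThan_Suc_shift) simp
  finally show ?case .
qed

lemma bit_nat_ge_length:
  assumes "(j::nat) < 2^n" and "n \<le> i"
  shows "\<not> bit j i"
proof -
  have "j < 2^i" using assms by (meson order_less_le_trans one_le_numeral power_increasing)
  then show ?thesis by (simp add: bit_iff_odd)
qed

lemma nat_eq_iff_low_bits_eq:
  "(j::nat) < 2^n \<Longrightarrow> j' < 2^n \<Longrightarrow> j = j' \<longleftrightarrow> (\<forall>i<n. bit j i = bit j' i)"
  by (metis bit_eq_iff bit_nat_ge_length not_le)

lemma prod_if_one_zero:
  assumes "finite S"
  shows "(\<Prod>i\<in>S. (if P i then 1 else 0::'a::comm_semiring_1)) = (if \<forall>i\<in>S. P i then 1 else 0)"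
  using assms by (induction S rule: finite_induct) auto

lemma prod_if_one_eq_power_card:
  fixes n :: nat
  shows "(\<Prod>i<n. (if P i then c else 1::'a::comm_monoid_mult)) = c ^ card {i. i < n \<and> P i}"
proof -
  have "(\<Prod>i<n. (if P i then c else 1)) = (\<Prod>i\<in>{i\<in>{..<n}. P i}. c)"
    by (rule prod.inter_filter[symmetric]) simp
  also have "{i\<in>{..<n}. P i} = {i. i < n \<and> P i}" by auto
  finally show ?thesis by simp
qed

lemma prod_single_factor_if_one_zero:
  fixes X :: "nat \<Rightarrow> 'a::comm_semiring_1"
  assumes "k < n"
  shows "(\<Prod>i<n. if i = k then X i else (if Q i then 1 else 0))
         = X k * (if \<forall>i<n. i \<noteq> k \<longrightarrow> Q i then 1 else 0)"
proof -
  have "(\<Prod>i<n. if i = k then X i else (if Q i then 1 else 0))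
     = X k * (\<Prod>i\<in>{..<n} - {k}. if i = k then X i else (if Q i then 1 else 0))"
    using assms by (subst prod.remove[OF finite_lessThan, of k]) auto
  also have "(\<Prod>i\<in>{..<n} - {k}. if i = k then X i else (if Q i then 1 else 0))
     = (\<Prod>i\<in>{..<n} - {k}. (if Q i then 1 else 0))"
    by (rule prod.cong) auto
  also have "\<dots> = (if \<forall>i\<in>{..<n} - {k}. Q i then 1 else 0)" by (rule prod_if_one_zero) simp
  finally show ?thesis by auto
qed

section \<open>A Chernoff bound for independent bits\<close>

definition product_bernoulli :: "nat \<Rightarrow> real \<Rightarrow> nat \<Rightarrow> real" where
  "product_bernoulli n p j = (\<Prod>i<n. if bit j i then p else 1 - p)"

lemma product_bernoulli_nonneg: "0 \<le> p \<Longrightarrow> p \<le> 1 \<Longrightarrow> 0 \<le> product_bernoulli n p j"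
  unfolding product_bernoulli_def by (intro prod_nonneg) auto

lemma product_bernoulli_mgf:
  "(\<Sum>j<2^n. product_bernoulli n p j * exp (t * real (hamming n j))) = (1 - p + p * exp t) ^ n"
proof -
  have "product_bernoulli n p j * exp (t * real (hamming n j))
      = (\<Prod>i<n. if bit j i then p * exp t else 1 - p)" for j :: nat
  proof -
    have "exp (t * real (hamming n j)) = (\<Prod>i<n. if bit j i then exp t else 1)"
      by (simp add: prod_if_one_eq_power_card hamming_def exp_of_nat_mult[symmetric] mult.commute)
    then show ?thesis
      unfolding product_bernoulli_def
      by (simp add: prod.distrib[symmetric] if_distrib if_distribR cong: if_cong)
  qed
  then show ?thesis
    using sum_bit_strings_prod[of "\<lambda>i b. if b then p * exp t else 1 - p" n] by (simp add: add.commute)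
qed

lemma bernoulli_mgf_le:
  fixes p t :: real
  assumes "0 \<le> p" "p \<le> 1/2" "0 \<le> t"
  shows "1 - p + p * exp t \<le> exp (t/2 + t^2/8)"
proof -
  have pos: "0 < 1 + p * (exp t - 1)"
    using assms by (smt (verit) mult_nonneg_nonneg one_le_exp_iff)
  have "ln (1 + p * (exp t - 1)) \<le> t * p + t^2/8"
    using Hoeffdings_lemma_aux[of t p] assms by simp
  then have "1 + p * (exp t - 1) \<le> exp (t * p + t^2/8)"
    using pos by (metis exp_le_cancel_iff exp_ln)
  also have "\<dots> \<le> exp (t/2 + t^2/8)"
    using assms mult_left_mono[of p "1/2" t] by simp
  finally show ?thesis by (simp add: algebra_simps)
qed

lemma product_bernoulli_upper_tail:
  fixes p \<theta> :: real
  assumes p: "0 \<le> p" "p \<le> 1/2" and \<theta>: "\<theta> \<ge> real n / 2"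
  shows "(\<Sum>j\<in>{j. j < 2^n \<and> real (hamming n j) \<ge> \<theta>}. product_bernoulli n p j)
         \<le> exp (- (2 * (\<theta> - real n / 2)^2) / (3 * real n))"
proof -
  define S where "S = {j. j < 2^n \<and> real (hamming n j) \<ge> \<theta>}"
  define d where "d = \<theta> - real n / 2"
  define t where "t = 4 * d / real n"
  have w0: "0 \<le> product_bernoulli n p j" for j using p by (intro product_bernoulli_nonneg) auto
  have t0: "0 \<le> t" using \<theta> by (simp add: t_def d_def)
  have "sum (product_bernoulli n p) S
      \<le> (\<Sum>j\<in>S. product_bernoulli n p j * exp (t * (real (hamming n j) - \<theta>)))"
  proof (rule sum_mono)
    fix j assume "j \<in> S"
    then have "1 \<le> exp (t * (real (hamming n j) - \<theta>))" using t0 by (simp add: S_def)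
    then show "product_bernoulli n p j \<le> product_bernoulli n p j * exp (t * (real (hamming n j) - \<theta>))"
      using w0[of j] by (metis mult.right_neutral mult_left_mono)
  qed
  also have "\<dots> \<le> (\<Sum>j<2^n. product_bernoulli n p j * exp (t * (real (hamming n j) - \<theta>)))"
    using w0 by (intro sum_mono2) (auto simp: S_def)
  also have "\<dots> = exp (- t * \<theta>) * (\<Sum>j<2^n. product_bernoulli n p j * exp (t * real (hamming n j)))"
    by (simp add: sum_distrib_left exp_diff exp_minus field_simps)
  also have "\<dots> = exp (- t * \<theta>) * (1 - p + p * exp t) ^ n"
    by (simp only: product_bernoulli_mgf)
  also have "\<dots> \<le> exp (- t * \<theta>) * exp (t/2 + t^2/8) ^ n"
    using bernoulli_mgf_le[OF p t0] p t0 by (intro mult_left_mono power_mono) auto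
  also have "\<dots> = exp (- t * \<theta> + real n * (t/2 + t^2/8))"
    by (simp only: exp_add[symmetric] exp_of_nat_mult[symmetric])
  also have "- t * \<theta> + real n * (t/2 + t^2/8) = - (2 * d^2) / real n"
    by (cases "n = 0") (simp_all add: t_def d_def field_simps power2_eq_square)
  also have "exp (- (2 * d^2) / real n) \<le> exp (- (2 * d^2) / (3 * real n))"
    by (cases "n = 0") (simp_all add: divide_left_mono)
  finally show ?thesis by (simp add: S_def d_def)
qed

section \<open>The single-qubit Hamiltonian\<close>

definition qubit_vec :: "real \<Rightarrow> real \<Rightarrow> bool \<Rightarrow> bool \<Rightarrow> real" where
  "qubit_vec a b y c = (if y then (if c then a else -b) else (if c then b else a))"

definition qubit_ham :: "real \<Rightarrow> bool \<Rightarrow> bool \<Rightarrow> real" where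
  "qubit_ham s c c' = (1-s) * (if c = c' then 1/2 else -1/2) + s * (if c \<and> c' then 1 else 0)"

definition qubit_eigenbasis :: "real \<Rightarrow> real \<Rightarrow> real \<Rightarrow> real \<Rightarrow> real \<Rightarrow> bool" where
  "qubit_eigenbasis s a b l0 l1 \<longleftrightarrow>
     (\<forall>y c'. qubit_vec a b y False * qubit_ham s False c' + qubit_vec a b y True * qubit_ham s True c'
             = (if y then l1 else l0) * qubit_vec a b y c')"

lemma qubit_eigenbasis_divide:
  assumes "qubit_eigenbasis s a b l0 l1"
  shows "qubit_eigenbasis s (a / q) (b / q) l0 l1"
  unfolding qubit_eigenbasis_def
proof (intro allI)
  fix y c'
  have scale: "qubit_vec (a / q) (b / q) y c = qubit_vec a b y c / q" for c
    by (simp add: qubit_vec_def)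
  show "qubit_vec (a / q) (b / q) y False * qubit_ham s False c'
        + qubit_vec (a / q) (b / q) y True * qubit_ham s True c'
        = (if y then l1 else l0) * qubit_vec (a / q) (b / q) y c'"
    using arg_cong[OF assms[unfolded qubit_eigenbasis_def, rule_format, of y c'], of "\<lambda>x. x / q"]
    unfolding scale by (simp add: add_divide_distrib)
qed

lemma qubit_eigenbasis_unnormalized:
  fixes s r :: real
  defines "A \<equiv> (1 - s) / 2"
  assumes r: "r^2 = A^2 + s^2/4"
  shows "qubit_eigenbasis s (r + s/2) A (A + s/2 - r) (A + s/2 + r)"
  unfolding qubit_eigenbasis_def
proof (intro allI)
  fix y c'
  have ham: "qubit_ham s False False = A" "qubit_ham s False True = -A" "qubit_ham s True False = -A"
    "qubit_ham s True True = A + s"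
    by (simp_all add: qubit_ham_def A_def algebra_simps)
  show "qubit_vec (r + s/2) A y False * qubit_ham s False c' + qubit_vec (r + s/2) A y True * qubit_ham s True c'
        = (if y then A + s/2 + r else A + s/2 - r) * qubit_vec (r + s/2) A y c'"
    using r by (cases y; cases c') (simp_all add: qubit_vec_def ham algebra_simps power2_eq_square)
qed

lemma qubit_eigenbasis_exists:
  assumes "0 \<le> s" "s \<le> 1"
  obtains a b l0 l1 where "a^2 + b^2 = 1" "0 \<le> b" "b \<le> a" "l0 < l1" "qubit_eigenbasis s a b l0 l1"
proof -
  define A where "A = (1 - s) / 2"
  define r where "r = sqrt (A^2 + s^2/4)"
  have A0: "0 \<le> A" using assms by (simp add: A_def)
  have "0 < A^2 + s^2/4"
    using assms by (cases "s = 0") (simp_all add: A_def add_nonneg_pos)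
  then have r2: "r^2 = A^2 + s^2/4" and r0: "0 < r" by (simp_all add: r_def)
  have rA: "A \<le> r" unfolding r_def using A0 assms by (intro real_le_rsqrt) simp
  define q where "q = sqrt ((r + s/2)^2 + A^2)"
  have q0: "0 < q" unfolding q_def using r0 assms by (intro real_sqrt_gt_zero add_pos_nonneg) auto
  have q2: "q^2 = (r + s/2)^2 + A^2" unfolding q_def by simp
  show thesis
  proof
    show "(( r + s/2) / q)^2 + (A / q)^2 = 1"
      unfolding power_divide add_divide_distrib[symmetric] q2[symmetric] using q0 by simp
    show "0 \<le> A / q" "A / q \<le> (r + s/2) / q"
      using A0 q0 rA assms by (simp_all add: divide_right_mono)
    show "A + s/2 - r < A + s/2 + r" using r0 by simp
    show "qubit_eigenbasis s ((r + s/2) / q) (A / q) (A + s/2 - r) (A + s/2 + r)"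
      using qubit_eigenbasis_unnormalized[OF r2[unfolded A_def]] unfolding A_def
      by (rule qubit_eigenbasis_divide)
  qed
qed

section \<open>The n-qubit Hamiltonian as a sum of tensor products\<close>

definition Ham_tensor :: "nat \<Rightarrow> real \<Rightarrow> nat \<Rightarrow> nat \<Rightarrow> real" where
  "Ham_tensor n s j j' = (\<Sum>k<n. \<Prod>i<n. if i = k then qubit_ham s (bit j i) (bit j' i)
                                         else (if bit j i = bit j' i then 1 else 0))"

lemma Ham_eq_Ham_tensor:
  assumes j: "j < 2^n" and j': "j' < 2^n"
  shows "Ham n s j j' = of_real (Ham_tensor n s j j')"
proof -
  have "Ham n s j j' = (\<Sum>k<n. of_real (1 - s) * minus_proj n k j j' + of_real s * one_proj k j j')"
    unfolding Ham_def by (simp add: sum.distrib sum_distrib_left)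
  also have "\<dots> = (\<Sum>k<n. of_real (\<Prod>i<n. if i = k then qubit_ham s (bit j i) (bit j' i)
                                           else (if bit j i = bit j' i then 1 else 0)))"
  proof (rule sum.cong[OF refl])
    fix k assume "k \<in> {..<n}"
    then have k: "k < n" by simp
    have eq: "j = j' \<longleftrightarrow> (\<forall>i<n. i \<noteq> k \<longrightarrow> bit j i = bit j' i) \<and> bit j k = bit j' k"
      using nat_eq_iff_low_bits_eq[OF j j'] k by auto
    show "of_real (1 - s) * minus_proj n k j j' + of_real s * one_proj k j j' =
      complex_of_real (\<Prod>i<n. if i = k then qubit_ham s (bit j i) (bit j' i)
                              else (if bit j i = bit j' i then 1 else 0))"
      unfolding prod_single_factor_if_one_zero[OF k]
      unfolding minus_proj_def one_proj_def qubit_ham_def eq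
      by auto
  qed
  finally show ?thesis by (simp add: Ham_tensor_def)
qed

lemma Ham_sym: "Ham n s j j' = Ham n s j' j"
  unfolding Ham_def minus_proj_def one_proj_def
  by (auto intro!: sum.cong arg_cong2[where f="(+)"] arg_cong2[where f="(*)"])

section \<open>The product eigenbasis and the ground state\<close>

locale qubit_product_eigenbasis =
  fixes n :: nat and s a b l0 l1 :: real
  assumes normalized: "a^2 + b^2 = 1" and b_nonneg: "0 \<le> b" and b_le_a: "b \<le> a"
    and l0_less_l1: "l0 < l1" and eigenbasis: "qubit_eigenbasis s a b l0 l1"
begin

definition eigvec :: "nat \<Rightarrow> nat \<Rightarrow> real" where
  "eigvec x j = (\<Prod>i<n. qubit_vec a b (bit x i) (bit j i))"

definition eigval :: "nat \<Rightarrow> real" where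
  "eigval x = (\<Sum>k<n. if bit x k then l1 else l0)"

definition eig_coeff :: "(nat \<Rightarrow> complex) \<Rightarrow> nat \<Rightarrow> complex" where
  "eig_coeff \<alpha> x = (\<Sum>j<2^n. of_real (eigvec x j) * \<alpha> j)"

lemma eigvec_Ham_tensor: "(\<Sum>j::nat<2^n. eigvec x j * Ham_tensor n s j j') = eigval x * eigvec x j'"
proof -
  have "(\<Sum>j::nat<2^n. eigvec x j * Ham_tensor n s j j')
      = (\<Sum>k<n. \<Sum>j::nat<2^n. \<Prod>i<n. qubit_vec a b (bit x i) (bit j i) *
          (if i = k then qubit_ham s (bit j i) (bit j' i) else (if bit j i = bit j' i then 1 else 0)))"
    unfolding eigvec_def Ham_tensor_def
    by (simp add: sum_distrib_left prod.distrib sum.swap[of _ "{..<n}"])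
  also have "\<dots> = (\<Sum>k<n. \<Prod>i<n. (if i = k then (if bit x i then l1 else l0) else 1)
                                   * qubit_vec a b (bit x i) (bit j' i))"
  proof (rule sum.cong[OF refl])
    fix k
    show "(\<Sum>j::nat<2^n. \<Prod>i<n. qubit_vec a b (bit x i) (bit j i) *
            (if i = k then qubit_ham s (bit j i) (bit j' i) else (if bit j i = bit j' i then 1 else 0)))
          = (\<Prod>i<n. (if i = k then (if bit x i then l1 else l0) else 1) * qubit_vec a b (bit x i) (bit j' i))"
      unfolding sum_bit_strings_prod[of "\<lambda>i c. qubit_vec a b (bit x i) c *
          (if i = k then qubit_ham s c (bit j' i) else (if c = bit j' i then 1 else 0))" n]
      using eigenbasis unfolding qubit_eigenbasis_def
      by (intro prod.cong refl) (cases "bit j' i"; auto)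
  qed
  also have "\<dots> = (\<Sum>k<n. (if bit x k then l1 else l0) * eigvec x j')"
    unfolding eigvec_def prod.distrib by (simp add: prod.delta)
  finally show ?thesis by (simp add: eigval_def sum_distrib_right)
qed

lemma eigvec_orthonormal:
  assumes j: "j < 2^n" and j': "j' < 2^n"
  shows "(\<Sum>x::nat<2^n. eigvec x j * eigvec x j') = (if j = j' then 1 else 0)"
proof -
  have "(\<Sum>x::nat<2^n. eigvec x j * eigvec x j') = (\<Prod>i<n. (if bit j i = bit j' i then 1 else 0))"
    unfolding eigvec_def prod.distrib[symmetric]
    unfolding sum_bit_strings_prod[of "\<lambda>i y. qubit_vec a b y (bit j i) * qubit_vec a b y (bit j' i)" n]
    using normalized by (intro prod.cong refl) (auto simp: qubit_vec_def power2_eq_square)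
  also have "\<dots> = (if j = j' then 1 else 0)"
    using prod_if_one_zero[of "{..<n}" "\<lambda>i. bit j i = bit j' i"] nat_eq_iff_low_bits_eq[OF j j'] by auto
  finally show ?thesis .
qed

lemma eigval_0_less:
  assumes "0 < x" "x < 2^n"
  shows "eigval 0 < eigval x"
proof -
  obtain k where k: "bit x k" using assms(1) bit_eq_iff[of x 0] by auto
  then have "k < n" using bit_nat_ge_length[OF assms(2)] not_le by blast
  then have "(if bit x k then l1 else l0) - l0 \<le> (\<Sum>i<n. (if bit x i then l1 else l0) - l0)"
    using l0_less_l1 by (intro member_le_sum) auto
  also have "\<dots> = eigval x - eigval 0" by (simp add: eigval_def sum_subtractf)
  finally show ?thesis using k l0_less_l1 by simp
qed

lemma eigvec_0_sq: "eigvec 0 j ^ 2 = product_bernoulli n (b^2) j"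
  unfolding eigvec_def product_bernoulli_def prod_power_distrib
  using normalized by (intro prod.cong refl) (auto simp: qubit_vec_def)

lemma sum_eigvec_0_sq: "(\<Sum>j<2^n. eigvec 0 j ^ 2) = 1"
  unfolding eigvec_0_sq product_bernoulli_def
  by (simp add: sum_bit_strings_prod[of "\<lambda>i c. if c then b^2 else 1 - b^2" n])

lemma eigvec_0_0: "eigvec 0 0 = a ^ n"
  by (simp add: eigvec_def qubit_vec_def)

lemma a_pos: "0 < a"
  using normalized b_nonneg b_le_a by (cases "a = 0") auto

lemma eigval_0_is_eigenvalue: "is_eigenvalue n (Ham n s) (of_real (eigval 0))"
proof -
  define \<psi> where "\<psi> j = (if j < 2^n then complex_of_real (eigvec 0 j) else 0)" for j
  have "matvec n (Ham n s) \<psi> i = of_real (eigval 0) * \<psi> i" for i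
  proof (cases "i < 2^n")
    case True
    have "matvec n (Ham n s) \<psi> i = (\<Sum>j<2^n. of_real (eigvec 0 j * Ham_tensor n s j i))"
      unfolding matvec_def using True
      by (simp add: \<psi>_def, intro sum.cong refl) (simp add: Ham_sym[of n s i] Ham_eq_Ham_tensor mult.commute)
    also have "\<dots> = of_real (eigval 0 * eigvec 0 i)"
      by (simp only: of_real_sum[symmetric] eigvec_Ham_tensor)
    finally show ?thesis using True by (simp add: \<psi>_def)
  qed (simp add: matvec_def \<psi>_def)
  moreover have "\<psi> 0 \<noteq> 0" using a_pos by (simp add: \<psi>_def eigvec_0_0)
  ultimately show ?thesis
    unfolding is_eigenvalue_def is_state_def by (intro exI[of _ \<psi>]) (auto simp: \<psi>_def)
qed

lemma eig_coeff_eigen: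
  assumes "matvec n (Ham n s) \<alpha> = (\<lambda>i. E * \<alpha> i)"
  shows "E * eig_coeff \<alpha> x = of_real (eigval x) * eig_coeff \<alpha> x"
proof -
  have row: "(\<Sum>j<2^n. Ham n s i j * \<alpha> j) = E * \<alpha> i" if "i < 2^n" for i
    using fun_cong[OF assms, of i] that unfolding matvec_def by simp
  have col: "(\<Sum>j<2^n. of_real (eigvec x j) * Ham n s j j') = of_real (eigval x * eigvec x j')"
    if "j' < 2^n" for j'
    using that by (simp add: Ham_eq_Ham_tensor flip: eigvec_Ham_tensor)
  have "E * eig_coeff \<alpha> x = (\<Sum>j<2^n. of_real (eigvec x j) * (\<Sum>j'<2^n. Ham n s j j' * \<alpha> j'))"
    unfolding eig_coeff_def by (simp add: sum_distrib_left row mult.left_commute)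
  also have "\<dots> = (\<Sum>j'<2^n. (\<Sum>j<2^n. of_real (eigvec x j) * Ham n s j j') * \<alpha> j')"
    unfolding sum_distrib_left sum_distrib_right mult.assoc by (rule sum.swap)
  also have "\<dots> = of_real (eigval x) * eig_coeff \<alpha> x"
    by (simp add: col eig_coeff_def sum_distrib_left mult.assoc)
  finally show ?thesis .
qed

lemma expand_in_eigvecs:
  assumes "j < 2^n"
  shows "\<alpha> j = (\<Sum>x<2^n. of_real (eigvec x j) * eig_coeff \<alpha> x)"
proof -
  have "(\<Sum>x<2^n. of_real (eigvec x j) * eig_coeff \<alpha> x)
      = (\<Sum>j'<2^n. of_real (\<Sum>x<2^n. eigvec x j * eigvec x j') * \<alpha> j')"
    unfolding eig_coeff_def of_real_sum of_real_mult sum_distrib_left sum_distrib_right mult.assoc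
    by (rule sum.swap)
  also have "\<dots> = (\<Sum>j'<2^n. if j = j' then \<alpha> j' else 0)"
    by (intro sum.cong refl) (simp add: eigvec_orthonormal assms)
  finally show ?thesis using assms by simp
qed

lemma ground_state_eq_product:
  assumes "ground_state n (Ham n s) \<alpha>"
  obtains c where "cmod c = 1" "\<And>j. j < 2^n \<Longrightarrow> \<alpha> j = c * of_real (eigvec 0 j)"
proof
  from assms obtain E where norm: "(\<Sum>j<2^n. (cmod (\<alpha> j))^2) = 1"
    and eigen: "matvec n (Ham n s) \<alpha> = (\<lambda>i. E * \<alpha> i)"
    and min: "\<forall>E'. is_eigenvalue n (Ham n s) E' \<longrightarrow> Re E \<le> Re E'"
    unfolding ground_state_def by blast
  have excited: "eig_coeff \<alpha> x = 0" if "0 < x" "x < 2^n" for x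
  proof (rule ccontr)
    assume "eig_coeff \<alpha> x \<noteq> 0"
    then have "E = of_real (eigval x)" using eig_coeff_eigen[OF eigen, of x] by simp
    then show False using min eigval_0_is_eigenvalue eigval_0_less[OF that] by fastforce
  qed
  show ground: "\<alpha> j = eig_coeff \<alpha> 0 * of_real (eigvec 0 j)" if "j < 2^n" for j
  proof -
    have "\<alpha> j = of_real (eigvec 0 j) * eig_coeff \<alpha> 0
                 + (\<Sum>x\<in>{..<2^n} - {0}. of_real (eigvec x j) * eig_coeff \<alpha> x)"
      using expand_in_eigvecs[OF that] by (simp add: sum.remove[OF finite_lessThan, of 0])
    also have "(\<Sum>x\<in>{..<2^n} - {0}. of_real (eigvec x j) * eig_coeff \<alpha> x) = 0"
      by (intro sum.neutral) (auto simp: excited)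
    finally show ?thesis by simp
  qed
  have "1 = (\<Sum>j<2^n. (cmod (eig_coeff \<alpha> 0))^2 * eigvec 0 j ^ 2)"
    unfolding norm[symmetric] by (intro sum.cong refl) (simp add: ground norm_mult power_mult_distrib)
  then have "(cmod (eig_coeff \<alpha> 0))^2 = 1"
    by (simp add: sum_distrib_left[symmetric] sum_eigvec_0_sq)
  then show "cmod (eig_coeff \<alpha> 0) = 1"
    by (smt (verit) norm_ge_zero power2_eq_1_iff)
qed

lemma hadamard_eigvec_0:
  "(\<Sum>j'::nat<2^n. (-1) ^ hamming n (and j j') / sqrt (2^n) * eigvec 0 j')
   = (\<Prod>i<n. if bit j i then (a - b) / sqrt 2 else (a + b) / sqrt 2)"
proof -
  have summand: "(-1) ^ hamming n (and j j') / sqrt (2^n) * eigvec 0 j'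
     = (\<Prod>i<n. (if bit j i \<and> bit j' i then -1 else 1) / sqrt 2 * qubit_vec a b False (bit j' i))"
    for j' :: nat
  proof -
    have "(-1::real) ^ hamming n (and j j') = (\<Prod>i<n. (if bit j i \<and> bit j' i then -1 else 1))"
      by (simp add: prod_if_one_eq_power_card hamming_def bit_and_iff)
    moreover have "sqrt (2^n) = (\<Prod>i<n. sqrt (2::real))" by (simp add: real_sqrt_power)
    ultimately show ?thesis by (simp add: eigvec_def prod.distrib prod_dividef)
  qed
  show ?thesis
    unfolding summand
    unfolding sum_bit_strings_prod[of "\<lambda>i c. (if bit j i \<and> c then -1 else 1) / sqrt 2 * qubit_vec a b False c" n]
    by (intro prod.cong refl) (auto simp: qubit_vec_def field_simps)
qed

lemma product_state_prob:
  assumes "cmod c = 1" and "\<And>j'. j' < 2^n \<Longrightarrow> \<alpha> j' = c * of_real (eigvec 0 j')" and "j < 2^n"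
  shows "(cmod (\<alpha> j))^2 = product_bernoulli n (b^2) j"
  using assms by (simp add: norm_mult power_mult_distrib eigvec_0_sq)

lemma product_state_hadamard_prob:
  assumes "cmod c = 1" and "\<And>j'. j' < 2^n \<Longrightarrow> \<alpha> j' = c * of_real (eigvec 0 j')"
  shows "(cmod (hadamard_amp n j \<alpha>))^2 = product_bernoulli n (1/2 - a*b) j"
proof -
  have "hadamard_amp n j \<alpha> = c * of_real (\<Sum>j'<2^n. (-1) ^ hamming n (and j j') / sqrt (2^n) * eigvec 0 j')"
    unfolding hadamard_amp_def of_real_sum sum_distrib_left
    using assms(2) by (intro sum.cong refl) (simp add: algebra_simps)
  also have "\<dots> = c * of_real (\<Prod>i<n. if bit j i then (a - b) / sqrt 2 else (a + b) / sqrt 2)"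
    by (simp only: hadamard_eigvec_0)
  finally have "(cmod (hadamard_amp n j \<alpha>))^2
      = (\<Prod>i<n. if bit j i then (a - b) / sqrt 2 else (a + b) / sqrt 2) ^ 2"
    using assms(1) by (simp only: norm_mult norm_of_real power_mult_distrib power2_abs) simp
  also have "\<dots> = product_bernoulli n (1/2 - a*b) j"
    unfolding product_bernoulli_def prod_power_distrib using normalized
    by (intro prod.cong refl) (auto simp: power_divide power2_eq_square field_simps)
  finally show ?thesis .
qed

lemma b_sq_le_half: "b^2 \<le> 1/2"
proof -
  have "b^2 \<le> a^2" using b_nonneg b_le_a by (intro power_mono) auto
  then show ?thesis using normalized by linarith
qed

lemma half_minus_ab_bounds: "0 \<le> 1/2 - a*b" "1/2 - a*b \<le> 1/2"
proof -
  have "0 \<le> (a - b)^2" by simp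
  then show "0 \<le> 1/2 - a*b" using normalized by (simp add: power2_eq_square algebra_simps)
  show "1/2 - a*b \<le> 1/2" using b_nonneg b_le_a by simp
qed

end

theorem mainTheorem14:
  fixes n :: nat and s \<theta> :: real and \<alpha> :: "nat \<Rightarrow> complex"
  assumes "0 \<le> s" and "s \<le> 1"
    and "\<theta> \<ge> real n / 2"
    and "ground_state n (Ham n s) \<alpha>"
  shows "(\<Sum>j\<in>{j. j < 2^n \<and> real (hamming n j) \<ge> \<theta>}.
            (cmod (\<alpha> j))^2 + (cmod (hadamard_amp n j \<alpha>))^2)
         \<le> 2 * exp (- (2 * (\<theta> - real n / 2)^2) / (3 * real n))"
proof -
  obtain a b l0 l1 where "a^2 + b^2 = 1" "0 \<le> b" "b \<le> a" "l0 < l1" "qubit_eigenbasis s a b l0 l1"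
    using qubit_eigenbasis_exists[OF assms(1,2)] .
  then interpret qubit_product_eigenbasis n s a b l0 l1 by unfold_locales
  obtain c where c: "cmod c = 1" and \<alpha>: "\<And>j. j < 2^n \<Longrightarrow> \<alpha> j = c * of_real (eigvec 0 j)"
    using ground_state_eq_product[OF assms(4)] by blast
  define S where "S = {j. j < 2^n \<and> real (hamming n j) \<ge> \<theta>}"
  have "(\<Sum>j\<in>S. (cmod (\<alpha> j))^2 + (cmod (hadamard_amp n j \<alpha>))^2)
      = (\<Sum>j\<in>S. product_bernoulli n (b^2) j) + (\<Sum>j\<in>S. product_bernoulli n (1/2 - a*b) j)"
    unfolding sum.distrib S_def
    by (intro arg_cong2[where f="(+)"] sum.cong refl)
       (simp_all add: product_state_prob[OF c \<alpha>] product_state_hadamard_prob[OF c \<alpha>])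
  also have "\<dots> \<le> exp (- (2 * (\<theta> - real n / 2)^2) / (3 * real n))
                   + exp (- (2 * (\<theta> - real n / 2)^2) / (3 * real n))"
    unfolding S_def
    by (intro add_mono product_bernoulli_upper_tail b_sq_le_half half_minus_ab_bounds assms(3)) simp
  finally show ?thesis by (simp add: S_def)
qed

end
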